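(* In the $\ell^2$ linear social choice setting, random dictatorship has worst-case distortion at most $O(d^{5/2})$.
   Context: Setting ($\ell^2$ linear social choice). Fix a dimension $d$. An instance consists of $n$ voters and $m$ candidates, each a vector in $\mathbb{R}^d_{\ge 0}$ with Euclidean norm $1$, with every voter vector in $\mathrm{Cone}(C)$ (nonnegative linear combinations of the candidate vectors $C$). Utility $u_v(c)=v^\top c$; each voter reports a ranking of $C$ consistent with its utilities (ties broken arbitrarily). $\mathrm{UW}(c)=\sum_v u_v(c)$. Distortion of a randomized rule on an instance: $\max_c\mathrm{UW}(c)/\mathbb{E}_{c\sim f}[\mathrm{UW}(c)]$; worst-case distortion is the supremum over instances, as a function of $d$. Random dictatorship: pick a voter uniformly at random and output its top-ranked candidate. *)

theory Defs
  imports Complex_Main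
begin

text \<open>Vectors in R^d are represented as functions nat => real; only coordinates i < d matter.\<close>

definition dotp :: "nat \<Rightarrow> (nat \<Rightarrow> real) \<Rightarrow> (nat \<Rightarrow> real) \<Rightarrow> real" where
  "dotp d x y = (\<Sum>i<d. x i * y i)"

definition unit_nonneg :: "nat \<Rightarrow> (nat \<Rightarrow> real) \<Rightarrow> bool" where
  "unit_nonneg d x \<longleftrightarrow> (\<forall>i<d. x i \<ge> 0) \<and> sqrt (\<Sum>i<d. (x i)^2) = 1"

definition in_cone :: "nat \<Rightarrow> (nat \<Rightarrow> real) set \<Rightarrow> (nat \<Rightarrow> real) \<Rightarrow> bool" where
  "in_cone d C v \<longleftrightarrow> (\<exists>lam. (\<forall>c\<in>C. lam c \<ge> 0) \<and> (\<forall>i<d. v i = (\<Sum>c\<in>C. lam c * c i)))"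

definition UW :: "nat \<Rightarrow> nat \<Rightarrow> (nat \<Rightarrow> nat \<Rightarrow> real) \<Rightarrow> (nat \<Rightarrow> real) \<Rightarrow> real" where
  "UW d n V c = (\<Sum>j<n. dotp d (V j) c)"

definition is_instance :: "nat \<Rightarrow> nat \<Rightarrow> (nat \<Rightarrow> nat \<Rightarrow> real) \<Rightarrow> (nat \<Rightarrow> real) set \<Rightarrow> bool" where
  "is_instance d n V C \<longleftrightarrow> n \<ge> 1 \<and> finite C \<and> C \<noteq> {} \<and> (\<forall>c\<in>C. unit_nonneg d c)
     \<and> (\<forall>j<n. unit_nonneg d (V j) \<and> in_cone d C (V j))"

definition valid_tops :: "nat \<Rightarrow> nat \<Rightarrow> (nat \<Rightarrow> nat \<Rightarrow> real) \<Rightarrow> (nat \<Rightarrow> real) set \<Rightarrow> (nat \<Rightarrow> nat \<Rightarrow> real) \<Rightarrow> bool" where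
  "valid_tops d n V C tp \<longleftrightarrow> (\<forall>j<n. tp j \<in> C \<and> (\<forall>c\<in>C. dotp d (V j) c \<le> dotp d (V j) (tp j)))"

text \<open>Expected welfare of random dictatorship (uniform voter, output its tp candidate).\<close>
definition RD_welfare :: "nat \<Rightarrow> nat \<Rightarrow> (nat \<Rightarrow> nat \<Rightarrow> real) \<Rightarrow> (nat \<Rightarrow> nat \<Rightarrow> real) \<Rightarrow> real" where
  "RD_welfare d n V tp = (\<Sum>j<n. UW d n V (tp j)) / real n"

definition RD_distortion :: "nat \<Rightarrow> nat \<Rightarrow> (nat \<Rightarrow> nat \<Rightarrow> real) \<Rightarrow> (nat \<Rightarrow> real) set \<Rightarrow> (nat \<Rightarrow> nat \<Rightarrow> real) \<Rightarrow> real" where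
  "RD_distortion d n V C tp = (MAX c\<in>C. UW d n V c) / RD_welfare d n V tp"

end

theory Submission
  imports Defs "HOL-Analysis.Convex"
begin

text \<open>Every voter \<open>v\<close> lies in the cone of the candidates, so \<open>1 = v \<bullet> v\<close> is a nonnegative
  combination of the utilities \<open>v \<bullet> c\<close>; the total weight of that combination is at most the
  coordinate sum of \<open>v\<close>, hence at most \<open>sqrt d\<close>, so the top candidate of each voter gives it
  utility at least \<open>1 / sqrt d\<close>. The expected welfare of random dictatorship is
  \<open>(1/n) \<Sum>\<^sub>i S\<^sub>i T\<^sub>i\<close>, where \<open>S\<close> and \<open>T\<close> are the coordinatewise sums of the voters and of
  their top candidates; two applications of Cauchy-Schwarz turn the \<open>n\<close> individual bounds into
  \<open>\<Sum>\<^sub>i S\<^sub>i T\<^sub>i \<ge> n\<^sup>2 / d\<^sup>2\<close>. As the optimal welfare is at most \<open>n\<close>, the distortion is in fact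
  at most \<open>d\<^sup>2\<close>.\<close>

lemma unit_nonneg_sum_squares: "unit_nonneg d x \<Longrightarrow> (\<Sum>i<d. (x i)\<^sup>2) = 1"
  unfolding unit_nonneg_def by auto

lemma unit_nonneg_nonneg: "unit_nonneg d x \<Longrightarrow> i < d \<Longrightarrow> 0 \<le> x i"
  unfolding unit_nonneg_def by auto

lemma unit_nonneg_le_one:
  assumes "unit_nonneg d x" "i < d"
  shows "x i \<le> 1"
proof -
  have "(x i)\<^sup>2 \<le> (\<Sum>k<d. (x k)\<^sup>2)"
    by (rule member_le_sum) (use assms in auto)
  then show ?thesis
    using assms by (simp add: unit_nonneg_sum_squares power_le_one_iff unit_nonneg_nonneg)
qed

lemma unit_nonneg_coord_sum_ge_one:
  assumes "unit_nonneg d x"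
  shows "1 \<le> (\<Sum>i<d. x i)"
proof -
  have "1 = (\<Sum>i<d. (x i)\<^sup>2)"
    using assms by (simp add: unit_nonneg_sum_squares)
  also have "\<dots> \<le> (\<Sum>i<d. x i)"
    using assms unit_nonneg_nonneg unit_nonneg_le_one
    by (intro sum_mono) (simp add: power2_eq_square mult_left_le)
  finally show ?thesis .
qed

lemma unit_nonneg_coord_sum_le_sqrt_dim:
  assumes "unit_nonneg d x"
  shows "(\<Sum>i<d. x i) \<le> sqrt (real d)"
proof -
  have "(\<Sum>i<d. x i)\<^sup>2 \<le> (\<Sum>i<d. (x i)\<^sup>2) * card {..<d}"
    by (rule sum_squared_le_sum_of_squares)
  then have "(\<Sum>i<d. x i)\<^sup>2 \<le> real d"
    using assms by (simp add: unit_nonneg_sum_squares)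
  then show ?thesis
    using real_le_rsqrt by blast
qed

lemma dotp_nonneg: "unit_nonneg d x \<Longrightarrow> unit_nonneg d y \<Longrightarrow> 0 \<le> dotp d x y"
  unfolding dotp_def by (intro sum_nonneg) (simp add: unit_nonneg_nonneg)

lemma dotp_le_one:
  assumes "unit_nonneg d x" "unit_nonneg d y"
  shows "dotp d x y \<le> 1"
proof -
  have "dotp d x y \<le> (\<Sum>i<d. ((x i)\<^sup>2 + (y i)\<^sup>2) / 2)"
    unfolding dotp_def
  proof (rule sum_mono)
    fix i
    have "0 \<le> (x i - y i)\<^sup>2" by simp
    then show "x i * y i \<le> ((x i)\<^sup>2 + (y i)\<^sup>2) / 2"
      by (simp add: power2_diff field_simps)
  qed
  also have "\<dots> = 1"
    using assms by (simp add: sum.distrib unit_nonneg_sum_squares flip: sum_divide_distrib)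
  finally show ?thesis .
qed

lemma dotp_le_sum_sqrt_mult:
  assumes "unit_nonneg d x" "unit_nonneg d y"
  shows "dotp d x y \<le> (\<Sum>i<d. sqrt (x i * y i))"
  unfolding dotp_def
proof (rule sum_mono)
  fix i assume "i \<in> {..<d}"
  then have "0 \<le> x i * y i" "x i * y i \<le> 1"
    using assms unit_nonneg_nonneg unit_nonneg_le_one by (auto simp: mult_le_one)
  then show "x i * y i \<le> sqrt (x i * y i)"
    by (intro real_le_rsqrt) (simp add: power2_eq_square mult_left_le)
qed

lemma dotp_cone_combination:
  assumes "\<forall>i<d. v i = (\<Sum>c\<in>C. lam c * c i)"
  shows "dotp d u v = (\<Sum>c\<in>C. lam c * dotp d u c)"
proof -
  have "dotp d u v = (\<Sum>i<d. \<Sum>c\<in>C. u i * (lam c * c i))"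
    using assms by (simp add: dotp_def sum_distrib_left)
  also have "\<dots> = (\<Sum>c\<in>C. lam c * dotp d u c)"
    by (subst sum.swap) (simp add: dotp_def sum_distrib_left mult_ac)
  finally show ?thesis .
qed

lemma top_utility_ge_inverse_sqrt_dim:
  assumes v: "unit_nonneg d v" "in_cone d C v"
    and C: "\<forall>c\<in>C. unit_nonneg d c"
    and top: "t \<in> C" "\<forall>c\<in>C. dotp d v c \<le> dotp d v t"
  shows "1 \<le> sqrt (real d) * dotp d v t"
proof -
  obtain lam where lam_nonneg: "\<forall>c\<in>C. 0 \<le> lam c"
    and v_eq: "\<forall>i<d. v i = (\<Sum>c\<in>C. lam c * c i)"
    using v(2) unfolding in_cone_def by blast
  define L where "L = (\<Sum>c\<in>C. lam c)"
  have "1 = dotp d v v"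
    using v(1) by (simp add: dotp_def unit_nonneg_sum_squares flip: power2_eq_square)
  also have "\<dots> = (\<Sum>c\<in>C. lam c * dotp d v c)"
    using v_eq by (rule dotp_cone_combination)
  also have "\<dots> \<le> (\<Sum>c\<in>C. lam c * dotp d v t)"
    using lam_nonneg top(2) by (intro sum_mono mult_left_mono) auto
  also have "\<dots> = L * dotp d v t"
    by (simp add: L_def sum_distrib_right)
  finally have mass: "1 \<le> L * dotp d v t" .
  have "L \<le> (\<Sum>c\<in>C. lam c * dotp d (\<lambda>_. 1) c)"
    unfolding L_def
  proof (rule sum_mono)
    fix c assume "c \<in> C"
    then have "0 \<le> lam c" "1 \<le> dotp d (\<lambda>_. 1) c"
      using lam_nonneg C unit_nonneg_coord_sum_ge_one by (auto simp: dotp_def)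
    then show "lam c \<le> lam c * dotp d (\<lambda>_. 1) c"
      using mult_left_mono by fastforce
  qed
  also have "\<dots> = dotp d (\<lambda>_. 1) v"
    using v_eq by (rule dotp_cone_combination[symmetric])
  also have "\<dots> \<le> sqrt (real d)"
    using unit_nonneg_coord_sum_le_sqrt_dim[OF v(1)] by (simp add: dotp_def)
  finally have "L \<le> sqrt (real d)" .
  then have "L * dotp d v t \<le> sqrt (real d) * dotp d v t"
    using dotp_nonneg[OF v(1)] C top(1) by (intro mult_right_mono) auto
  with mass show ?thesis
    by linarith
qed

lemma sum_sqrt_mult_squared_le:
  fixes a b :: "'a \<Rightarrow> real"
  assumes "\<forall>j\<in>J. 0 \<le> a j \<and> 0 \<le> b j"
  shows "(\<Sum>j\<in>J. sqrt (a j * b j))\<^sup>2 \<le> (\<Sum>j\<in>J. a j) * (\<Sum>j\<in>J. b j)"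
proof -
  have "(\<Sum>j\<in>J. sqrt (a j * b j))\<^sup>2 = (\<Sum>j\<in>J. sqrt (a j) * sqrt (b j))\<^sup>2"
    by (simp add: real_sqrt_mult)
  also have "\<dots> \<le> (\<Sum>j\<in>J. (sqrt (a j))\<^sup>2) * (\<Sum>j\<in>J. (sqrt (b j))\<^sup>2)"
    by (rule Cauchy_Schwarz_ineq_sum)
  also have "\<dots> = (\<Sum>j\<in>J. a j) * (\<Sum>j\<in>J. b j)"
    using assms by simp
  finally show ?thesis .
qed

lemma sum_UW_eq_sum_coord_products:
  "(\<Sum>j<n. UW d n V (T j)) = (\<Sum>i<d. (\<Sum>k<n. V k i) * (\<Sum>j<n. T j i))"
proof -
  have "(\<Sum>j<n. UW d n V (T j)) = (\<Sum>j<n. \<Sum>i<d. \<Sum>k<n. V k i * T j i)"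
    unfolding UW_def dotp_def by (simp add: sum.swap[of _ "{..<n}" "{..<d}"])
  also have "\<dots> = (\<Sum>i<d. (\<Sum>k<n. V k i) * (\<Sum>j<n. T j i))"
    by (subst sum.swap) (simp add: sum_distrib_left sum_distrib_right)
  finally show ?thesis .
qed

lemma sum_UW_ge_of_individual_bound:
  assumes units: "\<forall>j<n. unit_nonneg d (V j) \<and> unit_nonneg d (T j)"
    and a: "0 \<le> a" "\<forall>j<n. a \<le> dotp d (V j) (T j)"
  shows "(real n * a)\<^sup>2 \<le> real d * (\<Sum>j<n. UW d n V (T j))"
proof -
  define w where "w i = (\<Sum>j<n. sqrt (V j i * T j i))" for i
  have "real n * a \<le> (\<Sum>j<n. dotp d (V j) (T j))"
    using sum_mono[of "{..<n}" "\<lambda>_. a"] a(2) by simp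
  also have "\<dots> \<le> (\<Sum>j<n. \<Sum>i<d. sqrt (V j i * T j i))"
    using units dotp_le_sum_sqrt_mult by (intro sum_mono) auto
  also have "\<dots> = (\<Sum>i<d. w i)"
    unfolding w_def by (rule sum.swap)
  finally have "(real n * a)\<^sup>2 \<le> (\<Sum>i<d. w i)\<^sup>2"
    using a(1) by (intro power_mono) auto
  also have "\<dots> \<le> real d * (\<Sum>i<d. (w i)\<^sup>2)"
    using sum_squared_le_sum_of_squares[of w "{..<d}"] by (simp add: mult.commute)
  also have "\<dots> \<le> real d * (\<Sum>i<d. (\<Sum>k<n. V k i) * (\<Sum>j<n. T j i))"
    unfolding w_def using units unit_nonneg_nonneg
    by (intro mult_left_mono sum_mono sum_sqrt_mult_squared_le) auto
  finally show ?thesis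
    by (simp add: sum_UW_eq_sum_coord_products)
qed

lemma RD_welfare_ge:
  assumes "d \<ge> 1" "is_instance d n V C" "valid_tops d n V C tp"
  shows "real n / (real d)\<^sup>2 \<le> RD_welfare d n V tp"
proof -
  have n: "n \<ge> 1" and C: "\<forall>c\<in>C. unit_nonneg d c"
    and voters: "\<forall>j<n. unit_nonneg d (V j) \<and> in_cone d C (V j)"
    using assms(2) unfolding is_instance_def by auto
  have tops: "\<forall>j<n. tp j \<in> C \<and> (\<forall>c\<in>C. dotp d (V j) c \<le> dotp d (V j) (tp j))"
    using assms(3) unfolding valid_tops_def .
  have "\<forall>j<n. 1 / sqrt (real d) \<le> dotp d (V j) (tp j)"
    using voters tops top_utility_ge_inverse_sqrt_dim[OF _ _ C] assms(1)
    by (simp add: field_simps mult.commute)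
  then have "(real n / sqrt (real d))\<^sup>2 \<le> real d * (\<Sum>j<n. UW d n V (tp j))"
    using sum_UW_ge_of_individual_bound[of n d V tp "1 / sqrt (real d)"] voters tops C
    by simp
  then show ?thesis
    using n assms(1) unfolding RD_welfare_def
    by (simp add: power_divide field_simps power2_eq_square)
qed

lemma Max_UW_le:
  assumes "is_instance d n V C"
  shows "(MAX c\<in>C. UW d n V c) \<le> real n"
proof -
  have "UW d n V c \<le> real n" if "c \<in> C" for c
    using sum_mono[of "{..<n}" "\<lambda>j. dotp d (V j) c" "\<lambda>_. 1"] assms that dotp_le_one
    unfolding UW_def is_instance_def by simp
  then show ?thesis
    using assms unfolding is_instance_def by (simp add: Max_le_iff)
qed

lemma RD_distortion_le_dim_squared:
  assumes "d \<ge> 1" "is_instance d n V C" "valid_tops d n V C tp"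
  shows "RD_distortion d n V C tp \<le> (real d)\<^sup>2"
proof -
  have n: "n \<ge> 1"
    using assms(2) unfolding is_instance_def by simp
  have lower: "real n / (real d)\<^sup>2 \<le> RD_welfare d n V tp"
    using assms by (rule RD_welfare_ge)
  have pos: "0 < real n / (real d)\<^sup>2"
    using n assms(1) by simp
  have "RD_distortion d n V C tp \<le> real n / (real n / (real d)\<^sup>2)"
    unfolding RD_distortion_def using Max_UW_le[OF assms(2)] lower pos
    by (intro frac_le) auto
  also have "\<dots> = (real d)\<^sup>2"
    using n by simp
  finally show ?thesis .
qed

theorem theorem15:
  shows "\<exists>K::real. \<forall>d::nat. \<forall>n V C tp. d \<ge> 1 \<longrightarrow> is_instance d n V C \<longrightarrow> valid_tops d n V C tp
           \<longrightarrow> RD_distortion d n V C tp \<le> K * real d powr (5/2)"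
proof (intro exI[of _ 1] allI impI)
  fix d :: nat and n V C tp
  assume d: "d \<ge> 1" and "is_instance d n V C" "valid_tops d n V C tp"
  then have "RD_distortion d n V C tp \<le> real d powr 2"
    using RD_distortion_le_dim_squared by (simp add: powr_realpow)
  also have "\<dots> \<le> real d powr (5/2)"
    using d by (intro powr_mono) auto
  finally show "RD_distortion d n V C tp \<le> 1 * real d powr (5/2)"
    by simp
qed

end
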